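(* Let $\mathcal{G}$ and $\mathcal{S}$ be the gauge group and stabilizer group of a translation invariant (TI) Pauli topological subsystem code defined on an $L\times L$ torus, and let $\ell_S$ be the stabilizer locality length from property (iii) of the definition. Then for every region $R$ of the torus whose linear size is less than $L-\ell_S$, $$\mathcal{Z}_{\mathcal{P}}(\tilde{\mathcal{S}}_R)\cap\mathcal{P}(R)\ \propto\ \mathcal{G}(R),$$ i.e. every Pauli operator supported in $R$ that commutes with all truncations to $R$ of locally generated stabilizers is, up to a phase, a gauge operator supported in $R$, and conversely.
   Context: Qudits: a qudit of dimension $N$ has basis $|\alpha\rangle$, $\alpha\in\mathbb{Z}_N$, with $X=\sum_\alpha|\alpha+1\rangle\langle\alpha|$, $Z=\sum_\alpha\omega^\alpha|\alpha\rangle\langle\alpha|$, $\omega=e^{2\pi i/N}$; qudit dimensions may be composite. The Pauli group $\mathcal{P}$ consists of all finite products of single-site Pauli operators times phases; the support of a Pauli operator is the set of sites where it acts non-identically. For a group $\mathcal{T}$, $\mathcal{Z}_{\mathcal{P}}(\mathcal{T})$ is its centralizer in $\mathcal{P}$ and $\mathcal{Z}(\mathcal{T})$ its center; "$\propto$" means equality up to phases. A subsystem code is given by a gauge group $\mathcal{G}\le\mathcal{P}$ (containing all $U(1)$ phases) and a stabilizer group $\mathcal{S}$ (abelian, containing no nontrivial multiple of the identity) with $\mathcal{Z}(\mathcal{G})\propto\mathcal{S}$. A two-dimensional TI topological subsystem code is a subsystem code on a 2D lattice such that: (i) every translate of a gauge operator is a gauge operator; (ii) $\mathcal{G}$ has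 a generating set of operators with support of linear size less than a constant $\ell_G$; (iii) on the infinite plane, $\mathcal{S}$ has a generating set of operators with support of linear size less than a constant $\ell_S$, and $\mathcal{Z}_{\mathcal{P}}(\mathcal{S})\propto\mathcal{G}$. On the torus, $\tilde{\mathcal{S}}\le\mathcal{S}$ denotes the subgroup generated by local stabilizers (those with support of linear size less than $\ell_S$). For a region $R$: $\mathcal{P}(R)$ is the group of Pauli operators supported in $R$; $\mathcal{G}(R)=\mathcal{G}\cap\mathcal{P}(R)$; $\tilde{\mathcal{S}}_R$ is the group of restrictions (truncations) to $R$ of elements of $\tilde{\mathcal{S}}$. *)

theory Defs
  imports Complex_Main
begin

text \<open>Qudit lattice: unit cells are points of the plane lattice int x int; each unit cell
carries one qudit for every label of the finite type 'q, the qudit with label q having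
dimension d q.  A Pauli operator modulo phases is recorded by its exponent pairs:
P c q = (a, b) means that P acts on qudit (c, q) as X^a Z^b, with a, b reduced to
{0..<d q}.  All notions in the theorem are insensitive to phases (equality up to
phases is written with the proportionality sign in the paper), so Pauli operators
are represented modulo phases, i.e. as elements of the Pauli group divided by U(1).\<close>

type_synonym cell = "int \<times> int"
type_synonym 'q pvec = "cell \<Rightarrow> 'q \<Rightarrow> int \<times> int"

definition cell_supp :: "'q pvec \<Rightarrow> cell set" where
  "cell_supp P = {c. \<exists>q. P c q \<noteq> (0, 0)}"

definition is_pauli :: "('q \<Rightarrow> nat) \<Rightarrow> cell set \<Rightarrow> 'q pvec \<Rightarrow> bool" where
  "is_pauli d C P \<longleftrightarrow>
     (\<forall>c q. fst (P c q) \<in> {0..<int (d q)} \<and> snd (P c q) \<in> {0..<int (d q)}) \<and>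
     (\<forall>c q. c \<notin> C \<longrightarrow> P c q = (0, 0)) \<and> finite (cell_supp P)"

definition pone :: "'q pvec" where
  "pone = (\<lambda>c q. (0, 0))"

text \<open>Product (mod phases): X^a Z^b X^a' Z^b' is proportional to X^(a+a') Z^(b+b').\<close>
definition pmult :: "('q \<Rightarrow> nat) \<Rightarrow> 'q pvec \<Rightarrow> 'q pvec \<Rightarrow> 'q pvec" where
  "pmult d P Q = (\<lambda>c q. ((fst (P c q) + fst (Q c q)) mod int (d q),
                          (snd (P c q) + snd (Q c q)) mod int (d q)))"

definition pinv :: "('q \<Rightarrow> nat) \<Rightarrow> 'q pvec \<Rightarrow> 'q pvec" where
  "pinv d P = (\<lambda>c q. ((- fst (P c q)) mod int (d q), (- snd (P c q)) mod int (d q)))"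

text \<open>Commutation phase: P Q = comm_phase d P Q * Q P, since
  X^a Z^b X^a' Z^b' = omega^(b a' - a b') X^a' Z^b' X^a Z^b on a qudit of dimension N,
  omega = exp(2 pi i / N).\<close>
definition comm_phase :: "('q::finite \<Rightarrow> nat) \<Rightarrow> 'q pvec \<Rightarrow> 'q pvec \<Rightarrow> complex" where
  "comm_phase d P Q =
     (\<Prod>c\<in>cell_supp P. \<Prod>q\<in>(UNIV :: 'q set).
        cis (2 * pi * real_of_int (snd (P c q) * fst (Q c q) - fst (P c q) * snd (Q c q))
             / real (d q)))"

definition pcommute :: "('q::finite \<Rightarrow> nat) \<Rightarrow> 'q pvec \<Rightarrow> 'q pvec \<Rightarrow> bool" where
  "pcommute d P Q \<longleftrightarrow> comm_phase d P Q = 1"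

inductive_set pgen :: "('q \<Rightarrow> nat) \<Rightarrow> 'q pvec set \<Rightarrow> 'q pvec set"
  for d :: "'q \<Rightarrow> nat" and A :: "'q pvec set" where
  one: "pone \<in> pgen d A"
| mul: "a \<in> A \<Longrightarrow> P \<in> pgen d A \<Longrightarrow> pmult d a P \<in> pgen d A"
| mulinv: "a \<in> A \<Longrightarrow> P \<in> pgen d A \<Longrightarrow> pmult d (pinv d a) P \<in> pgen d A"

definition pcentralizer :: "('q::finite \<Rightarrow> nat) \<Rightarrow> cell set \<Rightarrow> 'q pvec set \<Rightarrow> 'q pvec set" where
  "pcentralizer d C T = {P. is_pauli d C P \<and> (\<forall>t\<in>T. pcommute d P t)}"

definition pcenter :: "('q::finite \<Rightarrow> nat) \<Rightarrow> 'q pvec set \<Rightarrow> 'q pvec set" where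
  "pcenter d G = {g \<in> G. \<forall>h\<in>G. pcommute d g h}"

definition paulis_on :: "('q \<Rightarrow> nat) \<Rightarrow> cell set \<Rightarrow> cell set \<Rightarrow> 'q pvec set" where
  "paulis_on d C R = {P. is_pauli d C P \<and> cell_supp P \<subseteq> R}"

definition restrict_to :: "cell set \<Rightarrow> 'q pvec \<Rightarrow> 'q pvec" where
  "restrict_to R P = (\<lambda>c q. if c \<in> R then P c q else (0, 0))"

definition linsize_lt :: "cell set \<Rightarrow> int \<Rightarrow> bool" where
  "linsize_lt A l \<longleftrightarrow> (\<exists>x0 y0. A \<subseteq> {x0..<x0 + l} \<times> {y0..<y0 + l})"

definition torus_cells :: "nat \<Rightarrow> cell set" where
  "torus_cells L = {0..<int L} \<times> {0..<int L}"

definition tmod :: "nat \<Rightarrow> cell \<Rightarrow> cell" where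
  "tmod L c = (fst c mod int L, snd c mod int L)"

definition torus_linsize_lt :: "nat \<Rightarrow> cell set \<Rightarrow> int \<Rightarrow> bool" where
  "torus_linsize_lt L A l \<longleftrightarrow>
     (\<exists>x0 y0. A \<subseteq> tmod L ` ({x0..<x0 + l} \<times> {y0..<y0 + l}))"

definition shift :: "cell \<Rightarrow> 'q pvec \<Rightarrow> 'q pvec" where
  "shift v P = (\<lambda>c q. P (fst c - fst v, snd c - snd v) q)"

definition wrap :: "('q \<Rightarrow> nat) \<Rightarrow> nat \<Rightarrow> 'q pvec \<Rightarrow> 'q pvec" where
  "wrap d L P = (\<lambda>c q. if c \<in> torus_cells L then
      ((\<Sum>c'\<in>{c' \<in> cell_supp P. tmod L c' = c}. fst (P c' q)) mod int (d q),
       (\<Sum>c'\<in>{c' \<in> cell_supp P. tmod L c' = c}. snd (P c' q)) mod int (d q))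
     else (0, 0))"

text \<open>A TI code is given by local gauge generators Gen (modulo translations).\<close>
definition plane_gauge :: "('q \<Rightarrow> nat) \<Rightarrow> 'q pvec set \<Rightarrow> 'q pvec set" where
  "plane_gauge d Gen = pgen d {shift v g | v g. g \<in> Gen}"

definition torus_gauge :: "('q \<Rightarrow> nat) \<Rightarrow> nat \<Rightarrow> 'q pvec set \<Rightarrow> 'q pvec set" where
  "torus_gauge d L Gen = pgen d {wrap d L (shift v g) | v g. g \<in> Gen}"

definition plane_stab :: "('q::finite \<Rightarrow> nat) \<Rightarrow> 'q pvec set \<Rightarrow> 'q pvec set" where
  "plane_stab d Gen = pcenter d (plane_gauge d Gen)"

definition torus_stab :: "('q::finite \<Rightarrow> nat) \<Rightarrow> nat \<Rightarrow> 'q pvec set \<Rightarrow> 'q pvec set" where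
  "torus_stab d L Gen = pcenter d (torus_gauge d L Gen)"

definition torus_local_stab ::
  "('q::finite \<Rightarrow> nat) \<Rightarrow> nat \<Rightarrow> nat \<Rightarrow> 'q pvec set \<Rightarrow> 'q pvec set" where
  "torus_local_stab d L lS Gen =
     pgen d {s \<in> torus_stab d L Gen. torus_linsize_lt L (cell_supp s) (int lS)}"

text \<open>Two-dimensional TI topological subsystem code (properties (i)-(iii)); (i) holds by
  construction of the gauge groups from all translates of Gen.\<close>
definition TI_top_subsystem_code ::
  "('q::finite \<Rightarrow> nat) \<Rightarrow> nat \<Rightarrow> nat \<Rightarrow> 'q pvec set \<Rightarrow> bool" where
  "TI_top_subsystem_code d lG lS Gen \<longleftrightarrow>
     (\<forall>q. 0 < d q) \<and>
     (\<forall>g\<in>Gen. is_pauli d UNIV g \<and> linsize_lt (cell_supp g) (int lG)) \<and>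
     (\<exists>T \<subseteq> plane_stab d Gen. (\<forall>t\<in>T. linsize_lt (cell_supp t) (int lS)) \<and>
                              pgen d T = plane_stab d Gen) \<and>
     pcentralizer d UNIV (plane_stab d Gen) = plane_gauge d Gen"

end

(* Modulo phases, Pauli operators are integer vectors and commutation is governed by an integer
   symplectic form: P and Q commute iff dim_prod d divides symp_form d (cell_supp P) P Q.
   Consequently commuting with a set is the same as commuting with the group it generates, and
   wrapping a plane operator s onto the torus is adjoint to pulling back along tmod: wrap s
   commutes with X iff s commutes with X composed with tmod.

   Gauge operators commute with all stabilizers, and truncation to R is invisible to an operator
   supported in R; this gives one inclusion.  Conversely, let P be supported in R, which is
   covered by the image of a square B of side L - lS.  Copy P onto B to obtain a plane operator.
   A local plane stabilizer t either misses B or lies, together with B, in a window of width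
   less than L, where the copy agrees with the pullback of P; as wrap t is a local torus
   stabilizer, the copy commutes with t.  The local stabilizers generate the plane stabilizer
   group, so the copy lies in its centralizer, which is the plane gauge group, and wrapping it
   back exhibits P as a torus gauge operator.  That wrapping maps plane stabilizers to torus
   stabilizers is where translation invariance enters: the pullback of a wrapped gauge generator
   agrees, on any finite set, with a finite product of period translates of that generator. *)

theory Submission
  imports Defs "HOL-Library.Real_Mod"
begin

section \<open>Commutation and the symplectic form\<close>

definition dim_prod :: "('q::finite \<Rightarrow> nat) \<Rightarrow> int" where
  "dim_prod d = (\<Prod>q\<in>UNIV. int (d q))"

definition dim_cofactor :: "('q::finite \<Rightarrow> nat) \<Rightarrow> 'q \<Rightarrow> int" where
  "dim_cofactor d q = dim_prod d div int (d q)"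

text \<open>Scaling by the cofactors puts the commutation phases of qudits of different dimensions
  over the common denominator \<open>dim_prod d\<close>.\<close>

definition symp_at :: "'q pvec \<Rightarrow> 'q pvec \<Rightarrow> cell \<Rightarrow> 'q \<Rightarrow> int" where
  "symp_at P Q c q = snd (P c q) * fst (Q c q) - fst (P c q) * snd (Q c q)"

definition symp_form :: "('q::finite \<Rightarrow> nat) \<Rightarrow> cell set \<Rightarrow> 'q pvec \<Rightarrow> 'q pvec \<Rightarrow> int" where
  "symp_form d S P Q = (\<Sum>c\<in>S. \<Sum>q\<in>UNIV. symp_at P Q c q * dim_cofactor d q)"

lemma prod_cis: "finite A \<Longrightarrow> (\<Prod>x\<in>A. cis (f x)) = cis (\<Sum>x\<in>A. f x)"
  by (induction A rule: finite_induct) (auto simp: cis_mult)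

lemma dim_prod_pos: "\<forall>q. 0 < d q \<Longrightarrow> 0 < dim_prod d"
  unfolding dim_prod_def by (auto intro: prod_pos)

lemma dim_mult_cofactor: "int (d q) * dim_cofactor d q = dim_prod d"
  unfolding dim_cofactor_def dim_prod_def by (rule dvd_mult_div_cancel) (rule dvd_prodI, auto)

lemma comm_phase_eq_cis_symp_form:
  assumes "\<forall>q. 0 < d q"
  shows "comm_phase d P Q =
           cis (2 * pi * real_of_int (symp_form d (cell_supp P) P Q) / real_of_int (dim_prod d))"
proof (cases "finite (cell_supp P)")
  case False
  then show ?thesis by (simp add: comm_phase_def symp_form_def)
next
  case True
  have D: "real_of_int (dim_prod d) > 0" using dim_prod_pos[OF assms] by simp
  have scale: "2 * pi * real_of_int (symp_at P Q c q) / real (d q)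
        = 2 * pi * real_of_int (symp_at P Q c q * dim_cofactor d q) / real_of_int (dim_prod d)" for c q
  proof -
    have "real_of_int (dim_prod d) = real (d q) * real_of_int (dim_cofactor d q)"
      by (metis dim_mult_cofactor of_int_mult of_int_of_nat_eq)
    then show ?thesis using assms D by (auto simp: field_simps)
  qed
  have "comm_phase d P Q = (\<Prod>c\<in>cell_supp P. \<Prod>q\<in>UNIV.
        cis (2 * pi * real_of_int (symp_at P Q c q * dim_cofactor d q) / real_of_int (dim_prod d)))"
    unfolding comm_phase_def using scale by (simp add: symp_at_def)
  also have "\<dots> = cis (\<Sum>c\<in>cell_supp P. \<Sum>q\<in>UNIV.
        2 * pi * real_of_int (symp_at P Q c q * dim_cofactor d q) / real_of_int (dim_prod d))"
    using True by (simp add: prod_cis)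
  also have "\<dots> = cis (2 * pi * real_of_int (symp_form d (cell_supp P) P Q) / real_of_int (dim_prod d))"
    unfolding symp_form_def by (simp add: sum_divide_distrib[symmetric] sum_distrib_left)
  finally show ?thesis .
qed

lemma pcommute_iff_dvd_symp_form:
  assumes "\<forall>q. 0 < d q"
  shows "pcommute d P Q \<longleftrightarrow> dim_prod d dvd symp_form d (cell_supp P) P Q"
proof -
  define n where "n = symp_form d (cell_supp P) P Q"
  have D: "real_of_int (dim_prod d) > 0" using dim_prod_pos[OF assms] by simp
  have "pcommute d P Q \<longleftrightarrow>
          (\<exists>m. 2 * pi * real_of_int n / real_of_int (dim_prod d) = of_int m * (2 * pi))"
    unfolding pcommute_def comm_phase_eq_cis_symp_form[OF assms] cis_eq_1_iff n_def ..
  also have "\<dots> \<longleftrightarrow> (\<exists>m. real_of_int n = of_int m * real_of_int (dim_prod d))"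
    using D by (auto simp: field_simps)
  also have "\<dots> \<longleftrightarrow> (\<exists>m. n = m * dim_prod d)"
    by (metis of_int_eq_iff of_int_mult)
  also have "\<dots> \<longleftrightarrow> dim_prod d dvd n"
    by (auto simp: dvd_def mult.commute)
  finally show ?thesis by (simp add: n_def)
qed

lemma pcommute_cong:
  assumes "\<And>c q. c \<in> cell_supp P \<Longrightarrow> Q c q = Q' c q"
  shows "pcommute d P Q \<longleftrightarrow> pcommute d P Q'"
  unfolding pcommute_def comm_phase_def using assms by (simp cong: prod.cong)

lemma pcommute_restrict_to:
  "cell_supp P \<subseteq> R \<Longrightarrow> pcommute d P (restrict_to R Q) \<longleftrightarrow> pcommute d P Q"
  by (rule pcommute_cong) (auto simp: restrict_to_def)

lemma pcommute_pone: "pcommute d P pone"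
  by (simp add: pcommute_def comm_phase_def pone_def)

lemma pcommute_disjoint_supp:
  assumes "cell_supp P \<inter> cell_supp Q = {}"
  shows "pcommute d P Q"
proof -
  have "pcommute d P Q \<longleftrightarrow> pcommute d P pone"
    by (rule pcommute_cong) (use assms in \<open>auto simp: cell_supp_def pone_def\<close>)
  then show ?thesis by (simp add: pcommute_pone)
qed

lemma symp_form_antisym: "symp_form d S P Q = - symp_form d S Q P"
  unfolding symp_form_def symp_at_def by (simp add: sum_negf[symmetric] algebra_simps)

lemma symp_form_mono_neutral:
  assumes "finite S'" "S \<subseteq> S'" "\<And>c q. c \<in> S' - S \<Longrightarrow> P c q = (0,0) \<or> Q c q = (0,0)"
  shows "symp_form d S P Q = symp_form d S' P Q"
  unfolding symp_form_def
proof (rule sum.mono_neutral_left[OF assms(1,2)], intro ballI sum.neutral)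
  fix c q assume "c \<in> S' - S"
  then show "symp_at P Q c q * dim_cofactor d q = 0"
    using assms(3)[of c q] unfolding symp_at_def by auto
qed

lemma symp_form_supp_eq:
  assumes "finite S" "cell_supp P \<subseteq> S"
  shows "symp_form d (cell_supp P) P Q = symp_form d S P Q"
  by (rule symp_form_mono_neutral) (use assms in \<open>auto simp: cell_supp_def\<close>)

lemma symp_form_swap:
  assumes "finite (cell_supp P)" "finite (cell_supp Q)"
  shows "symp_form d (cell_supp P) P Q = - symp_form d (cell_supp Q) Q P"
proof -
  define U where "U = cell_supp P \<union> cell_supp Q"
  have U: "finite U" using assms by (simp add: U_def)
  have "symp_form d (cell_supp P) P Q = symp_form d U P Q"
    and "symp_form d (cell_supp Q) Q P = symp_form d U Q P"
    by (rule symp_form_supp_eq[OF U], simp add: U_def)+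
  then show ?thesis using symp_form_antisym by metis
qed

lemma pcommute_sym:
  assumes "\<forall>q. 0 < d q" "finite (cell_supp P)" "finite (cell_supp Q)"
  shows "pcommute d P Q \<longleftrightarrow> pcommute d Q P"
  using symp_form_swap[OF assms(2,3)] by (simp add: pcommute_iff_dvd_symp_form[OF assms(1)])

lemma symp_form_mod_cong:
  assumes x: "\<And>c q. fst (Q c q) mod int (d q) = fst (Q' c q) mod int (d q)"
    and z: "\<And>c q. snd (Q c q) mod int (d q) = snd (Q' c q) mod int (d q)"
  shows "symp_form d S P Q mod dim_prod d = symp_form d S P Q' mod dim_prod d"
proof -
  have "dim_prod d dvd (symp_at P Q c q - symp_at P Q' c q) * dim_cofactor d q" for c q
  proof -
    obtain kx where kx: "fst (Q c q) - fst (Q' c q) = int (d q) * kx"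
      using x[of c q] unfolding mod_eq_dvd_iff dvd_def by blast
    obtain kz where kz: "snd (Q c q) - snd (Q' c q) = int (d q) * kz"
      using z[of c q] unfolding mod_eq_dvd_iff dvd_def by blast
    have "symp_at P Q c q - symp_at P Q' c q
          = snd (P c q) * (fst (Q c q) - fst (Q' c q)) - fst (P c q) * (snd (Q c q) - snd (Q' c q))"
      unfolding symp_at_def by (simp add: algebra_simps)
    also have "\<dots> = int (d q) * (snd (P c q) * kx - fst (P c q) * kz)"
      by (simp add: kx kz algebra_simps)
    finally have "(symp_at P Q c q - symp_at P Q' c q) * dim_cofactor d q
        = (int (d q) * dim_cofactor d q) * (snd (P c q) * kx - fst (P c q) * kz)"
      by (simp add: ac_simps)
    then show ?thesis by (simp add: dim_mult_cofactor)
  qed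
  then have "dim_prod d dvd (\<Sum>c\<in>S. \<Sum>q\<in>UNIV. (symp_at P Q c q - symp_at P Q' c q) * dim_cofactor d q)"
    by (intro dvd_sum)
  then show ?thesis
    unfolding symp_form_def mod_eq_dvd_iff
    by (simp add: sum_subtractf[symmetric] left_diff_distrib)
qed

lemma symp_form_pmult_mod:
  "symp_form d S P (pmult d a b) mod dim_prod d
     = (symp_form d S P a + symp_form d S P b) mod dim_prod d"
proof -
  have "symp_form d S P (pmult d a b) mod dim_prod d
      = symp_form d S P (\<lambda>c q. (fst (a c q) + fst (b c q), snd (a c q) + snd (b c q))) mod dim_prod d"
    by (rule symp_form_mod_cong) (simp_all add: pmult_def)
  also have "symp_form d S P (\<lambda>c q. (fst (a c q) + fst (b c q), snd (a c q) + snd (b c q)))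
      = symp_form d S P a + symp_form d S P b"
    unfolding symp_form_def symp_at_def by (simp add: sum.distrib[symmetric] algebra_simps)
  finally show ?thesis .
qed

lemma symp_form_pinv_mod:
  "symp_form d S P (pinv d a) mod dim_prod d = (- symp_form d S P a) mod dim_prod d"
proof -
  have "symp_form d S P (pinv d a) mod dim_prod d
      = symp_form d S P (\<lambda>c q. (- fst (a c q), - snd (a c q))) mod dim_prod d"
    by (rule symp_form_mod_cong) (simp_all add: pinv_def)
  also have "symp_form d S P (\<lambda>c q. (- fst (a c q), - snd (a c q))) = - symp_form d S P a"
    unfolding symp_form_def symp_at_def by (simp add: sum_negf[symmetric] algebra_simps)
  finally show ?thesis .
qed

lemma pcommute_pmult:
  assumes dpos: "\<forall>q. 0 < d q" and "pcommute d P a" "pcommute d P b"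
  shows "pcommute d P (pmult d a b)"
proof -
  have "dim_prod d dvd symp_form d (cell_supp P) P a + symp_form d (cell_supp P) P b"
    using assms(2,3) by (simp add: pcommute_iff_dvd_symp_form[OF dpos])
  then show ?thesis
    using symp_form_pmult_mod[of d "cell_supp P" P a b]
    by (simp add: pcommute_iff_dvd_symp_form[OF dpos] dvd_eq_mod_eq_0)
qed

lemma pcommute_pinv:
  assumes dpos: "\<forall>q. 0 < d q" and "pcommute d P a"
  shows "pcommute d P (pinv d a)"
proof -
  have "dim_prod d dvd - symp_form d (cell_supp P) P a"
    using assms(2) by (simp add: pcommute_iff_dvd_symp_form[OF dpos])
  then show ?thesis
    using symp_form_pinv_mod[of d "cell_supp P" P a]
    by (simp add: pcommute_iff_dvd_symp_form[OF dpos] dvd_eq_mod_eq_0)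
qed

lemma pcommute_pgen:
  assumes dpos: "\<forall>q. 0 < d q" and gens: "\<And>a. a \<in> A \<Longrightarrow> pcommute d P a"
    and Q: "Q \<in> pgen d A"
  shows "pcommute d P Q"
  using Q by induction (simp_all add: pcommute_pone pcommute_pmult pcommute_pinv dpos gens)

section \<open>Wrapping plane operators onto the torus\<close>

lemma cell_supp_pmult: "cell_supp (pmult d a b) \<subseteq> cell_supp a \<union> cell_supp b"
proof -
  have "pmult d a b c q = (0, 0)" if "c \<notin> cell_supp a \<union> cell_supp b" for c q
    using that by (simp add: cell_supp_def pmult_def)
  then show ?thesis unfolding cell_supp_def by blast
qed

lemma cell_supp_pinv: "cell_supp (pinv d a) \<subseteq> cell_supp a"
proof -
  have "pinv d a c q = (0, 0)" if "c \<notin> cell_supp a" for c q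
    using that by (simp add: cell_supp_def pinv_def)
  then show ?thesis unfolding cell_supp_def by blast
qed

lemma cell_supp_pone: "cell_supp pone = {}"
  unfolding cell_supp_def pone_def by auto

lemma cell_supp_pgen_subset:
  assumes "\<And>a. a \<in> A \<Longrightarrow> cell_supp a \<subseteq> C" "Q \<in> pgen d A"
  shows "cell_supp Q \<subseteq> C"
  using assms(2)
  by induction (use assms(1) cell_supp_pone cell_supp_pmult cell_supp_pinv in blast)+

lemma finite_cell_supp_pgen:
  assumes "\<And>a. a \<in> A \<Longrightarrow> finite (cell_supp a)" "Q \<in> pgen d A"
  shows "finite (cell_supp Q)"
  using assms(2)
  by induction
    (use assms(1) in \<open>auto simp: cell_supp_pone
       intro: finite_subset[OF cell_supp_pmult] finite_subset[OF cell_supp_pinv]\<close>)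

lemma wrap_eq_sum_over:
  assumes "finite F" "cell_supp P \<subseteq> F"
  shows "wrap d L P = (\<lambda>c q. if c \<in> torus_cells L then
      ((\<Sum>c'\<in>{c' \<in> F. tmod L c' = c}. fst (P c' q)) mod int (d q),
       (\<Sum>c'\<in>{c' \<in> F. tmod L c' = c}. snd (P c' q)) mod int (d q))
     else (0, 0))"
proof -
  have sum_eq: "(\<Sum>c'\<in>{c' \<in> cell_supp P. tmod L c' = c}. f (P c' q))
      = (\<Sum>c'\<in>{c' \<in> F. tmod L c' = c}. f (P c' q))" if "f (0, 0) = (0::int)" for c q f
  proof (rule sum.mono_neutral_left)
    show "finite {c' \<in> F. tmod L c' = c}" using assms(1) by simp
    show "{c' \<in> cell_supp P. tmod L c' = c} \<subseteq> {c' \<in> F. tmod L c' = c}" using assms(2) by auto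
    show "\<forall>c'\<in>{c' \<in> F. tmod L c' = c} - {c' \<in> cell_supp P. tmod L c' = c}. f (P c' q) = 0"
      using that by (auto simp: cell_supp_def) (metis)
  qed
  show ?thesis
    unfolding wrap_def by (intro ext) (simp add: sum_eq[where f = fst] sum_eq[where f = snd])
qed

lemma wrap_pmult:
  assumes "finite (cell_supp a)" "finite (cell_supp b)"
  shows "wrap d L (pmult d a b) = pmult d (wrap d L a) (wrap d L b)"
proof -
  define F where "F = cell_supp a \<union> cell_supp b"
  have F: "finite F" using assms by (simp add: F_def)
  have Fa: "cell_supp a \<subseteq> F" and Fb: "cell_supp b \<subseteq> F"
    and Fab: "cell_supp (pmult d a b) \<subseteq> F"
    using cell_supp_pmult by (auto simp: F_def)
  show ?thesis
    unfolding wrap_eq_sum_over[OF F Fa] wrap_eq_sum_over[OF F Fb] wrap_eq_sum_over[OF F Fab]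
    by (auto simp: F_def pmult_def mod_sum_eq sum.distrib mod_add_eq intro!: ext)
qed

lemma wrap_pinv:
  assumes "finite (cell_supp a)"
  shows "wrap d L (pinv d a) = pinv d (wrap d L a)"
  unfolding wrap_eq_sum_over[OF assms cell_supp_pinv] wrap_eq_sum_over[OF assms order_refl]
  by (auto simp: pinv_def mod_sum_eq sum_negf mod_minus_eq intro!: ext)

lemma wrap_pone: "wrap d L pone = pone"
  unfolding wrap_def pone_def by (auto simp: cell_supp_def intro!: ext)

lemma wrap_pgen:
  assumes fin: "\<And>a. a \<in> A \<Longrightarrow> finite (cell_supp a)" and Q: "Q \<in> pgen d A"
  shows "wrap d L Q \<in> pgen d (wrap d L ` A)"
  using Q
proof induction
  case one
  then show ?case by (simp add: wrap_pone pgen.one)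
next
  case (mul a Q)
  have "finite (cell_supp Q)" by (rule finite_cell_supp_pgen[OF fin mul.hyps(2)])
  then show ?case using mul fin by (simp add: wrap_pmult pgen.mul)
next
  case (mulinv a Q)
  have "finite (cell_supp Q)" by (rule finite_cell_supp_pgen[OF fin mulinv.hyps(2)])
  moreover have "finite (cell_supp (pinv d a))"
    using fin[OF mulinv.hyps(1)] cell_supp_pinv by (rule finite_subset[rotated])
  ultimately show ?case using mulinv fin by (simp add: wrap_pmult wrap_pinv pgen.mulinv)
qed

lemma pmult_wrap_pone: "pmult d (wrap d L P) pone = wrap d L P"
  unfolding pmult_def pone_def wrap_def by (auto intro!: ext)

lemma finite_torus_cells: "finite (torus_cells L)"
  unfolding torus_cells_def by simp

lemma tmod_in_torus_cells: "0 < L \<Longrightarrow> tmod L c \<in> torus_cells L"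
  unfolding tmod_def torus_cells_def by auto

lemma cell_supp_wrap: "cell_supp (wrap d L P) \<subseteq> torus_cells L"
  unfolding cell_supp_def wrap_def by auto

lemma cell_supp_wrap_subset_tmod: "cell_supp (wrap d L P) \<subseteq> tmod L ` cell_supp P"
proof -
  have "wrap d L P c q = (0, 0)" if "c \<notin> tmod L ` cell_supp P" for c q
  proof -
    have "{c' \<in> cell_supp P. tmod L c' = c} = {}" using that by auto
    then show ?thesis unfolding wrap_def by (simp only:) simp
  qed
  then show ?thesis unfolding cell_supp_def by blast
qed

lemma finite_cell_supp_wrap: "finite (cell_supp (wrap d L P))"
  using cell_supp_wrap finite_torus_cells by (rule finite_subset)

lemma symp_form_wrap_mod:
  assumes L: "0 < L" and fs: "finite (cell_supp s)"
  shows "symp_form d (cell_supp (wrap d L s)) (wrap d L s) X mod dim_prod d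
       = symp_form d (cell_supp s) s (\<lambda>a q. X (tmod L a) q) mod dim_prod d"
proof -
  define T where "T = tmod L ` cell_supp s"
  define fiber where "fiber c = {a \<in> cell_supp s. tmod L a = c}" for c
  define Xt where "Xt = (\<lambda>a q. X (tmod L a) q)"
  \<comment> \<open>\<open>ws\<close> is \<open>wrap d L s\<close> before the reduction modulo the qudit dimensions.\<close>
  define ws :: "'a pvec" where "ws = (\<lambda>c q. if c \<in> torus_cells L then
      (\<Sum>a\<in>fiber c. fst (s a q), \<Sum>a\<in>fiber c. snd (s a q)) else (0, 0))"
  have fT: "finite T" using fs by (simp add: T_def)
  have e1: "symp_form d (cell_supp (wrap d L s)) (wrap d L s) X = - symp_form d T X (wrap d L s)"
    using symp_form_supp_eq[OF fT cell_supp_wrap_subset_tmod[of d L s, folded T_def]]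
      symp_form_antisym by metis
  have e2: "symp_form d T X (wrap d L s) mod dim_prod d = symp_form d T X ws mod dim_prod d"
    by (rule symp_form_mod_cong) (simp_all add: wrap_def ws_def fiber_def)
  have fiber_sum: "symp_at X ws c q = (\<Sum>a\<in>fiber c. symp_at Xt s a q)" if "c \<in> T" for c q
  proof -
    have "c \<in> torus_cells L" using that tmod_in_torus_cells[OF L] by (auto simp: T_def)
    moreover have "symp_at Xt s a q = snd (X c q) * fst (s a q) - fst (X c q) * snd (s a q)"
      if "a \<in> fiber c" for a
      using that by (simp add: fiber_def Xt_def symp_at_def)
    ultimately show ?thesis
      by (simp add: symp_at_def ws_def sum_subtractf sum_distrib_left)
  qed
  have "symp_form d T X ws
      = (\<Sum>c\<in>T. \<Sum>q\<in>UNIV. \<Sum>a\<in>fiber c. symp_at Xt s a q * dim_cofactor d q)"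
    unfolding symp_form_def by (intro sum.cong refl) (simp add: fiber_sum sum_distrib_right)
  also have "\<dots> = (\<Sum>c\<in>T. \<Sum>a\<in>fiber c. \<Sum>q\<in>UNIV. symp_at Xt s a q * dim_cofactor d q)"
    by (intro sum.cong refl) (rule sum.swap)
  also have "\<dots> = symp_form d (cell_supp s) Xt s"
    unfolding symp_form_def fiber_def by (rule sum.group[OF fs fT]) (simp add: T_def)
  finally have e3: "symp_form d T X ws = - symp_form d (cell_supp s) s Xt"
    using symp_form_antisym by metis
  show ?thesis
    unfolding e1 using e2 e3 Xt_def by (metis mod_minus_cong minus_minus)
qed

lemma pcommute_wrap_iff:
  assumes "\<forall>q. 0 < d q" "0 < L" "finite (cell_supp s)"
  shows "pcommute d (wrap d L s) X \<longleftrightarrow> pcommute d s (\<lambda>a q. X (tmod L a) q)"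
  by (simp add: pcommute_iff_dvd_symp_form[OF assms(1)] dvd_eq_mod_eq_0
      symp_form_wrap_mod[OF assms(2,3)])

lemma shift_shift: "shift u (shift v g) = shift (fst u + fst v, snd u + snd v) g"
  unfolding shift_def by (auto intro!: ext simp: algebra_simps)

lemma cell_supp_shift: "cell_supp (shift v g) = (\<lambda>c. (fst c + fst v, snd c + snd v)) ` cell_supp g"
proof (intro equalityI subsetI)
  fix c assume "c \<in> cell_supp (shift v g)"
  then have "(fst c - fst v, snd c - snd v) \<in> cell_supp g"
    by (simp add: cell_supp_def shift_def)
  then show "c \<in> (\<lambda>c. (fst c + fst v, snd c + snd v)) ` cell_supp g"
    by (rule rev_image_eqI) simp
qed (auto simp: cell_supp_def shift_def)

lemma finite_cell_supp_plane_gauge: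
  assumes "\<forall>g\<in>Gen. is_pauli d UNIV g" "Q \<in> plane_gauge d Gen"
  shows "finite (cell_supp Q)"
  using assms(2) unfolding plane_gauge_def
  by (rule finite_cell_supp_pgen[rotated])
     (use assms(1) in \<open>auto simp: cell_supp_shift is_pauli_def\<close>)

lemma finite_cell_supp_torus_gauge: "Q \<in> torus_gauge d L Gen \<Longrightarrow> finite (cell_supp Q)"
  unfolding torus_gauge_def
  by (rule finite_subset[OF _ finite_torus_cells], rule cell_supp_pgen_subset[rotated])
     (auto intro: cell_supp_wrap[THEN subsetD])

lemma wrap_plane_gauge:
  assumes "\<forall>g\<in>Gen. is_pauli d UNIV g" "Q \<in> plane_gauge d Gen"
  shows "wrap d L Q \<in> torus_gauge d L Gen"
proof -
  have "wrap d L Q \<in> pgen d (wrap d L ` {shift v g | v g. g \<in> Gen})"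
    using assms unfolding plane_gauge_def
    by (intro wrap_pgen) (auto simp: cell_supp_shift is_pauli_def)
  moreover have "wrap d L ` {shift v g | v g. g \<in> Gen} = {wrap d L (shift v g) | v g. g \<in> Gen}"
    by auto
  ultimately show ?thesis unfolding torus_gauge_def by simp
qed

definition period_translate :: "nat \<Rightarrow> cell \<Rightarrow> cell \<Rightarrow> cell" where
  "period_translate L k c = (fst c - int L * fst k, snd c - int L * snd k)"

definition periodize :: "('q \<Rightarrow> nat) \<Rightarrow> nat \<Rightarrow> cell set \<Rightarrow> 'q pvec \<Rightarrow> 'q pvec" where
  "periodize d L K g = (\<lambda>c q.
     ((\<Sum>k\<in>K. fst (g (period_translate L k c) q)) mod int (d q),
      (\<Sum>k\<in>K. snd (g (period_translate L k c) q)) mod int (d q)))"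

lemma tmod_period_translate: "tmod L (period_translate L k c) = tmod L c"
  unfolding tmod_def period_translate_def by (simp add: mod_diff_eq[symmetric])

lemma periodize_in_plane_gauge:
  assumes "finite K" "g \<in> Gen"
  shows "periodize d L K (shift v g) \<in> plane_gauge d Gen"
  using assms(1) unfolding plane_gauge_def
proof (induction K rule: finite_induct)
  case empty
  have "periodize d L {} (shift v g) = pone" by (simp add: periodize_def pone_def)
  then show ?case by (simp add: pgen.one)
next
  case (insert k K)
  define u where "u = (int L * fst k, int L * snd k)"
  have "periodize d L (insert k K) (shift v g)
      = pmult d (shift u (shift v g)) (periodize d L K (shift v g))"
    using insert.hyps
    by (auto intro!: ext simp: periodize_def pmult_def u_def shift_def period_translate_def
        mod_add_right_eq)
  moreover have "shift u (shift v g) \<in> {shift v g | v g. g \<in> Gen}"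
    using assms(2) by (auto simp: shift_shift)
  ultimately show ?case using insert.IH by (simp add: pgen.mul)
qed

lemma sum_period_translates:
  assumes L: "0 < L" and fK: "finite K" and K: "{k. period_translate L k a \<in> cell_supp g} \<subseteq> K"
    and f0: "f (0, 0) = (0::int)"
  shows "(\<Sum>k\<in>K. f (g (period_translate L k a) q))
       = (\<Sum>b\<in>{b \<in> cell_supp g. tmod L b = tmod L a}. f (g b q))"
proof -
  define Ka where "Ka = {k \<in> K. period_translate L k a \<in> cell_supp g}"
  have "(\<Sum>k\<in>K. f (g (period_translate L k a) q)) = (\<Sum>k\<in>Ka. f (g (period_translate L k a) q))"
    by (rule sum.mono_neutral_right[OF fK]) (auto simp: Ka_def cell_supp_def f0)
  also have "\<dots> = (\<Sum>b\<in>(\<lambda>k. period_translate L k a) ` Ka. f (g b q))"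
  proof -
    have "inj_on (\<lambda>k. period_translate L k a) Ka"
      using L by (auto simp: inj_on_def period_translate_def prod_eq_iff)
    then show ?thesis by (simp add: sum.reindex)
  qed
  also have "(\<lambda>k. period_translate L k a) ` Ka = {b \<in> cell_supp g. tmod L b = tmod L a}"
  proof (intro equalityI subsetI)
    fix b assume "b \<in> {b \<in> cell_supp g. tmod L b = tmod L a}"
    then have b: "b \<in> cell_supp g" "int L dvd fst a - fst b" "int L dvd snd a - snd b"
      by (auto simp: tmod_def mod_eq_dvd_iff[symmetric])
    define k where "k = ((fst a - fst b) div int L, (snd a - snd b) div int L)"
    have "period_translate L k a = b"
      using b by (auto simp: period_translate_def k_def prod_eq_iff)
    moreover from this have "k \<in> Ka" using b K by (auto simp: Ka_def)
    ultimately show "b \<in> (\<lambda>k. period_translate L k a) ` Ka" by blast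
  qed (auto simp: Ka_def tmod_period_translate)
  finally show ?thesis .
qed

lemma wrap_pullback_eq_periodize:
  assumes L: "0 < L" and fK: "finite K" and K: "{k. period_translate L k a \<in> cell_supp g} \<subseteq> K"
  shows "wrap d L g (tmod L a) q = periodize d L K g a q"
  using sum_period_translates[OF L fK K, of fst] sum_period_translates[OF L fK K, of snd]
    tmod_in_torus_cells[OF L]
  by (simp add: wrap_def periodize_def)

lemma wrap_pullback_periodic:
  assumes L: "0 < L" and fA: "finite A" and fg: "finite (cell_supp g)"
  obtains K where "finite K"
    and "\<And>a q. a \<in> A \<Longrightarrow> wrap d L g (tmod L a) q = periodize d L K g a q"
proof
  define K where "K = (\<lambda>(a, b). ((fst a - fst b) div int L, (snd a - snd b) div int L)) ` (A \<times> cell_supp g)"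
  show "finite K" using fA fg by (simp add: K_def)
  fix a q assume a: "a \<in> A"
  have "{k. period_translate L k a \<in> cell_supp g} \<subseteq> K"
  proof
    fix k assume "k \<in> {k. period_translate L k a \<in> cell_supp g}"
    moreover have "k = (\<lambda>(a, b). ((fst a - fst b) div int L, (snd a - snd b) div int L))
                         (a, period_translate L k a)"
      using L by (simp add: period_translate_def)
    ultimately show "k \<in> K" using a unfolding K_def by blast
  qed
  then show "wrap d L g (tmod L a) q = periodize d L K g a q"
    by (rule wrap_pullback_eq_periodize[OF L \<open>finite K\<close>])
qed

lemma wrap_plane_stab:
  assumes dpos: "\<forall>q. 0 < d q" and L: "0 < L" and gens: "\<forall>g\<in>Gen. is_pauli d UNIV g"
    and s: "s \<in> plane_stab d Gen"
  shows "wrap d L s \<in> torus_stab d L Gen"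
proof -
  have sg: "s \<in> plane_gauge d Gen" and sc: "\<And>h. h \<in> plane_gauge d Gen \<Longrightarrow> pcommute d s h"
    using s by (auto simp: plane_stab_def pcenter_def)
  have fs: "finite (cell_supp s)" by (rule finite_cell_supp_plane_gauge[OF gens sg])
  \<comment> \<open>Translation invariance: the pullback of a wrapped generator is, on the support of \<open>s\<close>,
    a product of plane generators.\<close>
  have gen_comm: "pcommute d (wrap d L s) (wrap d L (shift v g))" if g: "g \<in> Gen" for v g
  proof -
    have fsg: "finite (cell_supp (shift v g))"
      using gens g by (simp add: cell_supp_shift is_pauli_def)
    obtain K where fK: "finite K" and K: "\<And>a q. a \<in> cell_supp s \<Longrightarrow>
        wrap d L (shift v g) (tmod L a) q = periodize d L K (shift v g) a q"
      using wrap_pullback_periodic[OF L fs fsg, where d = d] by blast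
    have "pcommute d s (periodize d L K (shift v g))"
      by (rule sc[OF periodize_in_plane_gauge[OF fK g]])
    moreover have "pcommute d s (\<lambda>a q. wrap d L (shift v g) (tmod L a) q)
        \<longleftrightarrow> pcommute d s (periodize d L K (shift v g))"
      by (rule pcommute_cong) (rule K)
    ultimately have "pcommute d s (\<lambda>a q. wrap d L (shift v g) (tmod L a) q)" by simp
    then show ?thesis by (simp add: pcommute_wrap_iff[OF dpos L fs])
  qed
  have "pcommute d (wrap d L s) h" if "h \<in> torus_gauge d L Gen" for h
    using that unfolding torus_gauge_def
    by (rule pcommute_pgen[OF dpos, rotated]) (use gen_comm in blast)
  then show ?thesis
    using wrap_plane_gauge[OF gens sg] by (simp add: torus_stab_def pcenter_def)
qed

lemma wrap_local_plane_stab: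
  assumes "\<forall>q. 0 < d q" "0 < L" "\<forall>g\<in>Gen. is_pauli d UNIV g"
    and s: "s \<in> plane_stab d Gen" and loc: "linsize_lt (cell_supp s) (int lS)"
  shows "wrap d L s \<in> torus_local_stab d L lS Gen"
proof -
  obtain x0 y0 where "cell_supp s \<subseteq> {x0..<x0 + int lS} \<times> {y0..<y0 + int lS}"
    using loc by (auto simp: linsize_lt_def)
  then have "torus_linsize_lt L (cell_supp (wrap d L s)) (int lS)"
    unfolding torus_linsize_lt_def using cell_supp_wrap_subset_tmod by blast
  then have "pmult d (wrap d L s) pone \<in> torus_local_stab d L lS Gen"
    unfolding torus_local_stab_def
    by (intro pgen.mul pgen.one) (simp add: wrap_plane_stab[OF assms(1-3) s])
  then show ?thesis by (simp add: pmult_wrap_pone)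
qed

lemma torus_gauge_subset_centralizer:
  assumes dpos: "\<forall>q. 0 < d q"
  shows "torus_gauge d L Gen \<inter> paulis_on d (torus_cells L) R
         \<subseteq> pcentralizer d (torus_cells L) (restrict_to R ` torus_local_stab d L lS Gen)"
proof
  fix g assume g: "g \<in> torus_gauge d L Gen \<inter> paulis_on d (torus_cells L) R"
  then have gp: "is_pauli d (torus_cells L) g" and gR: "cell_supp g \<subseteq> R"
    by (auto simp: paulis_on_def)
  have "pcommute d g s" if "s \<in> torus_local_stab d L lS Gen" for s
    using that unfolding torus_local_stab_def
  proof (rule pcommute_pgen[OF dpos, rotated])
    fix s0 assume "s0 \<in> {s \<in> torus_stab d L Gen. torus_linsize_lt L (cell_supp s) (int lS)}"
    then have "s0 \<in> torus_gauge d L Gen" "pcommute d s0 g"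
      using g by (auto simp: torus_stab_def pcenter_def)
    then show "pcommute d g s0"
      using pcommute_sym[OF dpos] finite_cell_supp_torus_gauge g by blast
  qed
  then show "g \<in> pcentralizer d (torus_cells L) (restrict_to R ` torus_local_stab d L lS Gen)"
    using gp gR by (auto simp: pcentralizer_def pcommute_restrict_to)
qed

section \<open>Lifting torus operators to the plane\<close>

lemma tmod_eq_imp_eq:
  assumes "tmod L a = tmod L b" "\<bar>fst a - fst b\<bar> < int L" "\<bar>snd a - snd b\<bar> < int L"
  shows "a = b"
proof -
  have "int L dvd fst a - fst b" "int L dvd snd a - snd b"
    using assms(1) by (auto simp: tmod_def mod_eq_dvd_iff[symmetric])
  then have "fst a - fst b = 0" "snd a - snd b = 0"
    using assms(2,3) dvd_imp_le_int[of "fst a - fst b" "int L"]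
      dvd_imp_le_int[of "snd a - snd b" "int L"] by linarith+
  then show ?thesis by (simp add: prod_eq_iff)
qed

lemma squares_disjoint_or_near:
  fixes a0 b0 x0 y0 l L :: int
  obtains "({a0..<a0 + l} \<times> {b0..<b0 + l}) \<inter> ({x0..<x0 + (L - l)} \<times> {y0..<y0 + (L - l)}) = {}"
  | "\<forall>a\<in>{a0..<a0 + l} \<times> {b0..<b0 + l}. \<forall>b\<in>{x0..<x0 + (L - l)} \<times> {y0..<y0 + (L - l)}.
       \<bar>fst a - fst b\<bar> < L \<and> \<bar>snd a - snd b\<bar> < L"
proof (cases "{a0..<a0 + l} \<inter> {x0..<x0 + (L - l)} \<noteq> {} \<and> {b0..<b0 + l} \<inter> {y0..<y0 + (L - l)} \<noteq> {}")
  case True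
  then obtain x' y' where x': "x' \<in> {a0..<a0 + l} \<inter> {x0..<x0 + (L - l)}"
    and y': "y' \<in> {b0..<b0 + l} \<inter> {y0..<y0 + (L - l)}"
    by blast
  show ?thesis
  proof (rule that(2), intro ballI)
    fix a b
    assume "a \<in> {a0..<a0 + l} \<times> {b0..<b0 + l}" "b \<in> {x0..<x0 + (L - l)} \<times> {y0..<y0 + (L - l)}"
    then show "\<bar>fst a - fst b\<bar> < L \<and> \<bar>snd a - snd b\<bar> < L"
      using x' y' by (auto simp: mem_Times_iff abs_less_iff)
  qed
next
  case False
  then show ?thesis by (intro that(1)) auto
qed

lemma is_pauli_entries:
  "is_pauli d C P \<Longrightarrow>
     0 \<le> fst (P c q) \<and> fst (P c q) < int (d q) \<and> 0 \<le> snd (P c q) \<and> snd (P c q) < int (d q)"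
  unfolding is_pauli_def atLeastLessThan_iff by blast

definition lift_block :: "cell set \<Rightarrow> nat \<Rightarrow> 'q pvec \<Rightarrow> 'q pvec" where
  "lift_block B L P = (\<lambda>c q. if c \<in> B then P (tmod L c) q else (0, 0))"

lemma cell_supp_lift_block: "cell_supp (lift_block B L P) \<subseteq> B"
  unfolding cell_supp_def lift_block_def by auto

lemma is_pauli_lift_block:
  assumes "\<forall>q. 0 < d q" "finite B" "is_pauli d (torus_cells L) P"
  shows "is_pauli d UNIV (lift_block B L P)"
  using assms(1,2) is_pauli_entries[OF assms(3)] finite_subset[OF cell_supp_lift_block]
  by (auto simp: is_pauli_def lift_block_def)

lemma lift_block_eq_pullback:
  assumes PB: "cell_supp P \<subseteq> tmod L ` B"
    and near: "\<forall>b\<in>B. \<bar>fst a - fst b\<bar> < int L \<and> \<bar>snd a - snd b\<bar> < int L"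
  shows "lift_block B L P a q = P (tmod L a) q"
proof (cases "a \<in> B")
  case False
  have "tmod L a \<notin> cell_supp P"
  proof
    assume "tmod L a \<in> cell_supp P"
    then obtain b where b: "b \<in> B" "tmod L a = tmod L b" using PB by auto
    then have "a = b" using near by (auto intro: tmod_eq_imp_eq)
    then show False using False b by simp
  qed
  then show ?thesis using False by (simp add: lift_block_def cell_supp_def)
qed (simp add: lift_block_def)

lemma wrap_lift_block:
  assumes fB: "finite B" and inj: "inj_on (tmod L) B"
    and P: "is_pauli d (torus_cells L) P" and PB: "cell_supp P \<subseteq> tmod L ` B"
  shows "wrap d L (lift_block B L P) = P"
proof (intro ext)
  fix c q
  have reduced: "fst (P c q) mod int (d q) = fst (P c q)" "snd (P c q) mod int (d q) = snd (P c q)"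
    using is_pauli_entries[OF P, of c q] by simp_all
  have outside: "P c q = (0, 0)" if "c \<notin> torus_cells L"
    using P that unfolding is_pauli_def by blast
  note wrap_lift = wrap_eq_sum_over[OF fB cell_supp_lift_block]
  show "wrap d L (lift_block B L P) c q = P c q"
  proof (cases "c \<in> tmod L ` B")
    case True
    then obtain b where b: "b \<in> B" "c = tmod L b" by blast
    then have "{b' \<in> B. tmod L b' = c} = {b}"
      using inj by (auto dest: inj_onD)
    then show ?thesis
      unfolding wrap_lift using b reduced outside by (simp add: lift_block_def)
  next
    case False
    then have empty: "{b' \<in> B. tmod L b' = c} = {}" and "P c q = (0, 0)"
      using PB by (auto simp: cell_supp_def)
    then show ?thesis unfolding wrap_lift empty by simp
  qed
qed

lemma pcommute_lift_block:
  assumes dpos: "\<forall>q. 0 < d q" and L: "0 < L" and fB: "finite B"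
    and fP: "finite (cell_supp P)" and PB: "cell_supp P \<subseteq> tmod L ` B"
    and ft: "finite (cell_supp t)"
    and near: "\<forall>a\<in>cell_supp t. \<forall>b\<in>B. \<bar>fst a - fst b\<bar> < int L \<and> \<bar>snd a - snd b\<bar> < int L"
    and comm: "pcommute d P (wrap d L t)"
  shows "pcommute d (lift_block B L P) t"
proof -
  have fPh: "finite (cell_supp (lift_block B L P))"
    using fB cell_supp_lift_block by (rule finite_subset[rotated])
  have "pcommute d t (lift_block B L P) \<longleftrightarrow> pcommute d t (\<lambda>a q. P (tmod L a) q)"
    by (rule pcommute_cong, rule lift_block_eq_pullback[OF PB]) (use near in blast)
  also have "\<dots> \<longleftrightarrow> pcommute d (wrap d L t) P"
    by (rule pcommute_wrap_iff[OF dpos L ft, symmetric])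
  also have "\<dots> \<longleftrightarrow> pcommute d P (wrap d L t)"
    by (rule pcommute_sym[OF dpos finite_cell_supp_wrap fP])
  finally show ?thesis
    using comm pcommute_sym[OF dpos fPh ft] by blast
qed

lemma pcommute_lift_block_local_stab:
  assumes dpos: "\<forall>q. 0 < d q" and L: "0 < L" and gens: "\<forall>g\<in>Gen. is_pauli d UNIV g"
    and P: "is_pauli d (torus_cells L) P" and PB: "cell_supp P \<subseteq> tmod L ` B"
    and B: "B = {x0..<x0 + (int L - int lS)} \<times> {y0..<y0 + (int L - int lS)}"
    and comm: "\<And>s. s \<in> torus_local_stab d L lS Gen \<Longrightarrow> pcommute d P s"
    and t: "t \<in> plane_stab d Gen" and t_loc: "linsize_lt (cell_supp t) (int lS)"
  shows "pcommute d (lift_block B L P) t"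
proof -
  obtain a0 b0 where t_sq: "cell_supp t \<subseteq> {a0..<a0 + int lS} \<times> {b0..<b0 + int lS}"
    using t_loc by (auto simp: linsize_lt_def)
  have ft: "finite (cell_supp t)"
    using t gens by (auto simp: plane_stab_def pcenter_def intro: finite_cell_supp_plane_gauge)
  have fB: "finite B" by (simp add: B)
  have fP: "finite (cell_supp P)" using P by (simp add: is_pauli_def)
  show ?thesis
  proof (cases rule: squares_disjoint_or_near[of a0 "int lS" b0 x0 "int L" y0])
    case 1
    then have "B \<inter> {a0..<a0 + int lS} \<times> {b0..<b0 + int lS} = {}"
      by (simp add: B Int_commute)
    then have "cell_supp (lift_block B L P) \<inter> cell_supp t = {}"
      using cell_supp_lift_block[of B L P] t_sq by blast
    then show ?thesis by (rule pcommute_disjoint_supp)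
  next
    case 2
    have "\<forall>a\<in>cell_supp t. \<forall>b\<in>B. \<bar>fst a - fst b\<bar> < int L \<and> \<bar>snd a - snd b\<bar> < int L"
    proof (intro ballI)
      fix a b assume a: "a \<in> cell_supp t" and b: "b \<in> B"
      show "\<bar>fst a - fst b\<bar> < int L \<and> \<bar>snd a - snd b\<bar> < int L"
        using bspec[OF bspec[OF 2 subsetD[OF t_sq a]] b[unfolded B]] .
    qed
    then show ?thesis
      using pcommute_lift_block[OF dpos L fB fP PB ft]
        comm[OF wrap_local_plane_stab[OF dpos L gens t t_loc]] by blast
  qed
qed

lemma torus_centralizer_subset_gauge:
  assumes code: "TI_top_subsystem_code d lG lS Gen" and L: "0 < L"
    and R_size: "torus_linsize_lt L R (int L - int lS)"
  shows "pcentralizer d (torus_cells L) (restrict_to R ` torus_local_stab d L lS Gen)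
           \<inter> paulis_on d (torus_cells L) R \<subseteq> torus_gauge d L Gen"
proof
  have dpos: "\<forall>q. 0 < d q" and gens: "\<forall>g\<in>Gen. is_pauli d UNIV g"
    and cent: "pcentralizer d UNIV (plane_stab d Gen) = plane_gauge d Gen"
    using code by (auto simp: TI_top_subsystem_code_def)
  obtain T where T: "T \<subseteq> plane_stab d Gen" "\<forall>t\<in>T. linsize_lt (cell_supp t) (int lS)"
    and T_gen: "pgen d T = plane_stab d Gen"
    using code by (auto simp: TI_top_subsystem_code_def)
  obtain x0 y0 where
    RB: "R \<subseteq> tmod L ` ({x0..<x0 + (int L - int lS)} \<times> {y0..<y0 + (int L - int lS)})"
    using R_size by (auto simp: torus_linsize_lt_def)
  define B where "B = {x0..<x0 + (int L - int lS)} \<times> {y0..<y0 + (int L - int lS)}"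
  have fB: "finite B" by (simp add: B_def)
  have inj: "inj_on (tmod L) B"
  proof (rule inj_onI)
    fix b b' assume "b \<in> B" "b' \<in> B" and eq: "tmod L b = tmod L b'"
    then have "\<bar>fst b - fst b'\<bar> < int L" "\<bar>snd b - snd b'\<bar> < int L"
      unfolding B_def mem_Times_iff atLeastLessThan_iff abs_less_iff by linarith+
    then show "b = b'" using tmod_eq_imp_eq[OF eq] by blast
  qed
  fix P
  assume "P \<in> pcentralizer d (torus_cells L) (restrict_to R ` torus_local_stab d L lS Gen)
               \<inter> paulis_on d (torus_cells L) R"
  then have P: "is_pauli d (torus_cells L) P" and PB: "cell_supp P \<subseteq> tmod L ` B"
    and comm: "\<And>s. s \<in> torus_local_stab d L lS Gen \<Longrightarrow> pcommute d P s"
    using RB by (auto simp: pcentralizer_def paulis_on_def B_def pcommute_restrict_to)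
  have "pcommute d (lift_block B L P) s" if "s \<in> plane_stab d Gen" for s
    using that unfolding T_gen[symmetric]
  proof (rule pcommute_pgen[OF dpos, rotated])
    fix t assume "t \<in> T"
    then show "pcommute d (lift_block B L P) t"
      using T by (intro pcommute_lift_block_local_stab[OF dpos L gens P PB B_def comm]) auto
  qed
  then have "lift_block B L P \<in> plane_gauge d Gen"
    using is_pauli_lift_block[OF dpos fB P] cent by (auto simp: pcentralizer_def)
  then have "wrap d L (lift_block B L P) \<in> torus_gauge d L Gen"
    by (rule wrap_plane_gauge[OF gens])
  then show "P \<in> torus_gauge d L Gen"
    by (simp only: wrap_lift_block[OF fB inj P PB])
qed

theorem mainTheorem1:
  fixes d :: "'q::finite \<Rightarrow> nat" and Gen :: "'q pvec set"
    and lG lS L :: nat and R :: "cell set"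
  assumes code: "TI_top_subsystem_code d lG lS Gen"
    and L_pos: "0 < L"
    and R_torus: "R \<subseteq> torus_cells L"
    and R_size: "torus_linsize_lt L R (int L - int lS)"
  shows "pcentralizer d (torus_cells L) (restrict_to R ` torus_local_stab d L lS Gen)
           \<inter> paulis_on d (torus_cells L) R
         = torus_gauge d L Gen \<inter> paulis_on d (torus_cells L) R"
proof
  show "pcentralizer d (torus_cells L) (restrict_to R ` torus_local_stab d L lS Gen)
          \<inter> paulis_on d (torus_cells L) R
        \<subseteq> torus_gauge d L Gen \<inter> paulis_on d (torus_cells L) R"
    using torus_centralizer_subset_gauge[OF code L_pos R_size] by auto
  have "\<forall>q. 0 < d q" using code by (simp add: TI_top_subsystem_code_def)
  then show "torus_gauge d L Gen \<inter> paulis_on d (torus_cells L) R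
        \<subseteq> pcentralizer d (torus_cells L) (restrict_to R ` torus_local_stab d L lS Gen)
          \<inter> paulis_on d (torus_cells L) R"
    by (intro Int_greatest torus_gauge_subset_centralizer) auto
qed

end
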